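(* Let $\Delta\ge 4$ and let $T$ be a tree of order $n$ with maximum degree $\Delta$. For $1\le i\le\Delta$ let $n_i$ be the number of vertices of $T$ of degree $i$, and for $1\le p\le q\le \Delta$ let $m_{p,q}$ be the number of edges of $T$ joining a vertex of degree $p$ to a vertex of degree $q$. Put $t=\left\lfloor\frac{\Delta+3}{2}\right\rfloor$ and $E_{\le t}=\sum_{1\le p\le q\le t} m_{p,q}$. Assume that $\Delta$ divides $n$, that $n_{i'}=0$ for all integers $i'$ with $t<i'<\Delta$, and that $m_{\Delta,\Delta}=0$. Then $E_{\le t}\ge \Delta-1$. *)

theory Defs
  imports Main
begin

definition simple_graph :: "'a set \<Rightarrow> 'a set set \<Rightarrow> bool" where
  "simple_graph V E \<longleftrightarrow> finite V \<and> (\<forall>e\<in>E. e \<subseteq> V \<and> card e = 2)"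

definition adj :: "'a set set \<Rightarrow> 'a \<Rightarrow> 'a \<Rightarrow> bool" where
  "adj E u v \<longleftrightarrow> {u, v} \<in> E"

definition connected_graph :: "'a set \<Rightarrow> 'a set set \<Rightarrow> bool" where
  "connected_graph V E \<longleftrightarrow> (\<forall>u\<in>V. \<forall>v\<in>V. (adj E)\<^sup>*\<^sup>* u v)"

definition has_cycle :: "'a set \<Rightarrow> 'a set set \<Rightarrow> bool" where
  "has_cycle V E \<longleftrightarrow> (\<exists>cs. length cs \<ge> 3 \<and> distinct cs \<and> set cs \<subseteq> V \<and>
      (\<forall>i < length cs. {cs ! i, cs ! ((i + 1) mod length cs)} \<in> E))"

definition is_tree :: "'a set \<Rightarrow> 'a set set \<Rightarrow> bool" where
  "is_tree V E \<longleftrightarrow> simple_graph V E \<and> V \<noteq> {} \<and> connected_graph V E \<and> \<not> has_cycle V E"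

definition degree :: "'a set set \<Rightarrow> 'a \<Rightarrow> nat" where
  "degree E v = card {e \<in> E. v \<in> e}"

definition max_degree :: "'a set \<Rightarrow> 'a set set \<Rightarrow> nat" where
  "max_degree V E = Max (degree E ` V)"

definition num_deg :: "'a set \<Rightarrow> 'a set set \<Rightarrow> nat \<Rightarrow> nat" where
  "num_deg V E i = card {v \<in> V. degree E v = i}"

definition num_edges_deg :: "'a set set \<Rightarrow> nat \<Rightarrow> nat \<Rightarrow> nat" where
  "num_edges_deg E p q =
     card {e \<in> E. \<exists>u v. e = {u, v} \<and> degree E u = p \<and> degree E v = q}"

end

theory Submission
  imports Defs
begin

text \<open>A tree on n vertices has n - 1 edges. Since no edge joins two vertices of maximum
  degree \<Delta>, the stars of the k vertices of degree \<Delta> are edge-disjoint, so k\<Delta> \<le> n - 1, and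
  as \<Delta> divides n even k\<Delta> \<le> n - \<Delta>. Hence at least \<Delta> - 1 edges avoid the vertices of degree
  \<Delta>; their endpoints have degree at most t because no degree lies strictly between t and \<Delta>.
  Neither \<Delta> \<ge> 4 nor the particular value of t is needed.\<close>

lemma simple_graph_finite_edges: "simple_graph V E \<Longrightarrow> finite E"
  unfolding simple_graph_def by (meson PowI finite_Pow_iff finite_subset subsetI)

lemma simple_graph_edge_other_end:
  assumes "simple_graph V E" "e \<in> E" "x \<in> e"
  obtains y where "e = {x, y}" "y \<noteq> x" "y \<in> V"
proof -
  have "e \<subseteq> V" "card e = 2" using assms unfolding simple_graph_def by auto
  then obtain a b where "e = {a, b}" "a \<noteq> b" by (auto simp: card_2_iff)
  with \<open>e \<subseteq> V\<close> \<open>x \<in> e\<close> show thesis by (metis insert_commute insert_iff insert_subset singletonD that)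
qed

definition hop_dist :: "'a set set \<Rightarrow> 'a \<Rightarrow> 'a \<Rightarrow> nat" where
  "hop_dist E r v = (LEAST k. (adj E ^^ k) r v)"

lemma connected_closer_neighbour:
  assumes "connected_graph V E" "r \<in> V" "v \<in> V" "v \<noteq> r"
  shows "\<exists>w. adj E w v \<and> hop_dist E r w < hop_dist E r v"
proof -
  have "(adj E)\<^sup>*\<^sup>* r v" using assms unfolding connected_graph_def by blast
  then have "(adj E ^^ hop_dist E r v) r v"
    unfolding hop_dist_def by (metis LeastI_ex rtranclp_imp_relpowp)
  moreover have "hop_dist E r v \<noteq> 0"
    using calculation \<open>v \<noteq> r\<close> by (metis relpowp_0_E)
  ultimately obtain m where m: "hop_dist E r v = Suc m" "(adj E ^^ Suc m) r v"
    by (metis not0_implies_Suc)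
  from m(2) obtain w where "(adj E ^^ m) r w" "adj E w v" by (rule relpowp_Suc_E)
  have "hop_dist E r w \<le> m" unfolding hop_dist_def by (rule Least_le) fact
  with \<open>adj E w v\<close> m(1) show ?thesis by auto
qed

text \<open>Each non-root vertex is mapped injectively to the edge joining it to a neighbour closer
  to the root.\<close>
lemma connected_card_vertices_le:
  assumes "simple_graph V E" "connected_graph V E" "V \<noteq> {}"
  shows "card V \<le> card E + 1"
proof -
  obtain r where r: "r \<in> V" using assms(3) by auto
  obtain p where p: "\<And>v. v \<in> V - {r} \<Longrightarrow> adj E (p v) v \<and> hop_dist E r (p v) < hop_dist E r v"
    using connected_closer_neighbour[OF assms(2) r] by (metis DiffE singletonI)
  have "inj_on (\<lambda>v. {p v, v}) (V - {r})"
  proof (rule inj_onI)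
    fix v w assume v: "v \<in> V - {r}" and w: "w \<in> V - {r}" and eq: "{p v, v} = {p w, w}"
    show "v = w"
    proof (rule ccontr)
      assume "v \<noteq> w"
      with eq have "v = p w" "w = p v" unfolding doubleton_eq_iff by blast+
      with p[OF v] p[OF w] show False by (metis less_asym)
    qed
  qed
  moreover have "(\<lambda>v. {p v, v}) ` (V - {r}) \<subseteq> E" using p unfolding adj_def by blast
  ultimately have "card (V - {r}) \<le> card E"
    using simple_graph_finite_edges[OF assms(1)] by (rule card_inj_on_le)
  with r show ?thesis by (simp add: card_Diff_singleton_if)
qed

definition is_path :: "'a set \<Rightarrow> 'a set set \<Rightarrow> 'a list \<Rightarrow> bool" where
  "is_path V E xs \<longleftrightarrow> distinct xs \<and> set xs \<subseteq> V \<and> length xs \<ge> 2 \<and>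
     (\<forall>i. Suc i < length xs \<longrightarrow> {xs ! i, xs ! Suc i} \<in> E)"

lemma is_path_length_le_card: "finite V \<Longrightarrow> is_path V E xs \<Longrightarrow> length xs \<le> card V"
  unfolding is_path_def by (metis card_mono distinct_card)

lemma is_path_snoc:
  assumes "is_path V E xs" "y \<notin> set xs" "y \<in> V" "{last xs, y} \<in> E"
  shows "is_path V E (xs @ [y])"
  unfolding is_path_def
proof (intro conjI allI impI)
  fix i assume i: "Suc i < length (xs @ [y])"
  show "{(xs @ [y]) ! i, (xs @ [y]) ! Suc i} \<in> E"
  proof (cases "Suc i < length xs")
    case True
    then show ?thesis using assms(1) unfolding is_path_def by (simp add: nth_append)
  next
    case False
    then have "i = length xs - 1" "Suc i = length xs" "xs \<noteq> []" using i by auto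
    then show ?thesis using assms(4) by (simp add: nth_append last_conv_nth)
  qed
qed (use assms in \<open>auto simp: is_path_def\<close>)

lemma is_path_drop: "is_path V E xs \<Longrightarrow> j + 2 \<le> length xs \<Longrightarrow> is_path V E (drop j xs)"
  unfolding is_path_def by (auto dest: in_set_dropD)

lemma is_path_closed_has_cycle:
  assumes "is_path V E cs" "length cs \<ge> 3" "{last cs, hd cs} \<in> E"
  shows "has_cycle V E"
  unfolding has_cycle_def
proof (intro exI conjI allI impI)
  fix i assume i: "i < length cs"
  show "{cs ! i, cs ! ((i + 1) mod length cs)} \<in> E"
  proof (cases "i + 1 < length cs")
    case True
    then show ?thesis using assms(1) unfolding is_path_def by simp
  next
    case False
    then have "i = length cs - 1" "i + 1 = length cs" "cs \<noteq> []" using i by auto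
    with assms(3) show ?thesis by (simp add: last_conv_nth hd_conv_nth)
  qed
qed (use assms in \<open>auto simp: is_path_def\<close>)

lemma simple_graph_longest_path:
  assumes "simple_graph V E" "E \<noteq> {}"
  obtains xs where "is_path V E xs" "\<And>ys. is_path V E ys \<Longrightarrow> length ys \<le> length xs"
proof -
  have fin: "finite V" using assms(1) unfolding simple_graph_def by simp
  obtain a b where "{a, b} \<in> E" "a \<noteq> b" "a \<in> V" "b \<in> V"
    using assms unfolding simple_graph_def card_2_iff by (metis all_not_in_conv insert_subset)
  then have "is_path V E [a, b]" unfolding is_path_def by (auto simp: less_Suc_eq)
  then have "\<exists>xs. is_path V E xs \<and> (\<forall>ys. is_path V E ys \<longrightarrow> length ys \<le> length xs)"
    by (rule ex_has_greatest_nat[where b = "card V + 1"])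
      (auto simp: less_Suc_eq_le dest: is_path_length_le_card[OF fin])
  with that show thesis by blast
qed

text \<open>A neighbour of the end of a longest path lies on the path, since otherwise the path
  extends; it is the penultimate vertex, since otherwise the path closes a cycle.\<close>
lemma longest_path_end_neighbour:
  assumes acyclic: "\<not> has_cycle V E" and xs: "is_path V E xs"
    and longest: "\<And>ys. is_path V E ys \<Longrightarrow> length ys \<le> length xs"
    and edge: "{last xs, y} \<in> E" "y \<noteq> last xs" "y \<in> V"
  shows "y = xs ! (length xs - 2)"
proof -
  define L where "L = length xs"
  have "L \<ge> 2" "xs \<noteq> []" using xs unfolding is_path_def L_def by auto
  then have last: "last xs = xs ! (L - 1)" unfolding L_def by (simp add: last_conv_nth)
  have "y \<in> set xs" using longest[OF is_path_snoc[OF xs _ \<open>y \<in> V\<close> edge(1)]] by fastforce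
  then obtain j where j: "j < L" "xs ! j = y" unfolding L_def by (auto simp: in_set_conv_nth)
  have "j \<noteq> L - 1" using j edge(2) last by auto
  moreover have "\<not> j + 3 \<le> L"
  proof
    assume "j + 3 \<le> L"
    then have "is_path V E (drop j xs)" "length (drop j xs) \<ge> 3"
      using is_path_drop[OF xs] unfolding L_def by auto
    moreover have "{last (drop j xs), hd (drop j xs)} \<in> E"
      using j edge(1) \<open>j + 3 \<le> L\<close> unfolding L_def by (simp add: hd_drop_conv_nth)
    ultimately show False using is_path_closed_has_cycle acyclic by blast
  qed
  ultimately have "j = L - 2" using j by linarith
  with j show ?thesis unfolding L_def by simp
qed

lemma acyclic_has_leaf:
  assumes sg: "simple_graph V E" and acyclic: "\<not> has_cycle V E" and "E \<noteq> {}"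
  shows "\<exists>x\<in>V. degree E x = 1"
proof -
  obtain xs where xs: "is_path V E xs"
    and longest: "\<And>ys. is_path V E ys \<Longrightarrow> length ys \<le> length xs"
    using simple_graph_longest_path[OF sg \<open>E \<noteq> {}\<close>] by blast
  define L where "L = length xs"
  define x where "x = last xs"
  have L: "L \<ge> 2" "xs \<noteq> []" "set xs \<subseteq> V" using xs unfolding is_path_def L_def by auto
  then have x: "x = xs ! (L - 1)" "x \<in> V" unfolding x_def L_def by (auto simp: last_conv_nth)
  have "Suc (L - 2) < L" "Suc (L - 2) = L - 1" using L by auto
  then have "{xs ! (L - 2), x} \<in> E" using xs unfolding is_path_def x L_def by metis
  moreover have "e = {xs ! (L - 2), x}" if e: "e \<in> E" "x \<in> e" for e
  proof -
    obtain y where y: "e = {x, y}" "y \<noteq> x" "y \<in> V" using simple_graph_edge_other_end[OF sg e] .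
    then have "y = xs ! (L - 2)"
      using longest_path_end_neighbour[OF acyclic xs longest] e unfolding x_def L_def by blast
    with y show ?thesis by auto
  qed
  ultimately have "{e \<in> E. x \<in> e} = {{xs ! (L - 2), x}}" by blast
  then have "degree E x = 1" unfolding degree_def by simp
  with x show ?thesis by blast
qed

lemma acyclic_card_edges_less:
  "simple_graph V E \<Longrightarrow> \<not> has_cycle V E \<Longrightarrow> V \<noteq> {} \<Longrightarrow> card E < card V"
proof (induction "card E" arbitrary: V E rule: less_induct)
  case less
  have fin: "finite V" "finite E"
    using less.prems simple_graph_def simple_graph_finite_edges by auto
  show ?case
  proof (cases "E = {}")
    case True
    then show ?thesis using fin less.prems by (simp add: card_gt_0_iff)
  next
    case False
    then obtain x where x: "x \<in> V" "degree E x = 1"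
      using acyclic_has_leaf less.prems by blast
    have "card {e' \<in> E. x \<in> e'} = 1" using x(2) unfolding degree_def .
    then obtain e where xe: "{e' \<in> E. x \<in> e'} = {e}" by (rule card_1_singletonE)
    then have e: "e \<in> E" "x \<in> e" by auto
    obtain y where "e = {x, y}" "y \<noteq> x" "y \<in> V"
      using simple_graph_edge_other_end[OF less.prems(1) e] .
    let ?V = "V - {x}" and ?E = "E - {e}"
    have "simple_graph ?V ?E"
      using less.prems(1) xe unfolding simple_graph_def by blast
    moreover have "\<not> has_cycle ?V ?E"
      using less.prems(2) unfolding has_cycle_def by blast
    moreover have "card ?E < card E" using e fin by (meson card_Diff1_less)
    ultimately have "card ?E < card ?V" using less.hyps \<open>y \<in> V\<close> \<open>y \<noteq> x\<close> by blast
    then show ?thesis using e x fin by (simp add: card_Diff_singleton)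
  qed
qed

lemma tree_card_edges: "is_tree V E \<Longrightarrow> card E + 1 = card V"
  using connected_card_vertices_le acyclic_card_edges_less unfolding is_tree_def by fastforce

lemma degree_pos: "finite E \<Longrightarrow> e \<in> E \<Longrightarrow> u \<in> e \<Longrightarrow> degree E u \<ge> 1"
  unfolding degree_def by (auto simp: Suc_le_eq card_gt_0_iff)

lemma card_edges_meeting_independent_set:
  assumes "simple_graph V E" "finite D" "\<And>e. e \<in> E \<Longrightarrow> \<not> e \<subseteq> D"
  shows "card {e \<in> E. e \<inter> D \<noteq> {}} = (\<Sum>v\<in>D. degree E v)"
proof -
  have "{e \<in> E. e \<inter> D \<noteq> {}} = (\<Union>v\<in>D. {e \<in> E. v \<in> e})" by blast
  also have "card \<dots> = (\<Sum>v\<in>D. card {e \<in> E. v \<in> e})"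
  proof (rule card_UN_disjoint)
    show "\<forall>v\<in>D. finite {e \<in> E. v \<in> e}" using simple_graph_finite_edges[OF assms(1)] by simp
    show "\<forall>v\<in>D. \<forall>w\<in>D. v \<noteq> w \<longrightarrow> {e \<in> E. v \<in> e} \<inter> {e \<in> E. w \<in> e} = {}"
    proof (intro ballI impI)
      fix v w assume "v \<in> D" "w \<in> D" "v \<noteq> w"
      have "e \<subseteq> D" if e: "e \<in> E" "v \<in> e" "w \<in> e" for e
      proof -
        obtain y where "e = {v, y}" using simple_graph_edge_other_end[OF assms(1) e(1,2)] .
        with e(3) \<open>v \<noteq> w\<close> \<open>v \<in> D\<close> \<open>w \<in> D\<close> show ?thesis by blast
      qed
      then show "{e \<in> E. v \<in> e} \<inter> {e \<in> E. w \<in> e} = {}" using assms(3) by blast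
    qed
  qed (fact assms(2))
  finally show ?thesis unfolding degree_def .
qed

lemma card_edges_le_sum_num_edges_deg:
  assumes "simple_graph V E" "G \<subseteq> E" "\<And>e u. e \<in> G \<Longrightarrow> u \<in> e \<Longrightarrow> degree E u \<le> t"
  shows "card G \<le> (\<Sum>p\<in>{1..t}. \<Sum>q\<in>{p..t}. num_edges_deg E p q)"
proof -
  define S where "S p q = {e \<in> E. \<exists>u v. e = {u, v} \<and> degree E u = p \<and> degree E v = q}" for p q
  have finE: "finite E" using simple_graph_finite_edges[OF assms(1)] .
  have "G \<subseteq> (\<Union>p\<in>{1..t}. \<Union>q\<in>{p..t}. S p q)"
  proof
    fix e assume e: "e \<in> G"
    with assms(1,2) obtain u v where uv: "e = {u, v}" "degree E u \<le> degree E v"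
      unfolding simple_graph_def card_2_iff by (metis insert_commute nat_le_linear subsetD)
    then have "e \<in> S (degree E u) (degree E v)" using e assms(2) unfolding S_def by blast
    moreover have "degree E u \<in> {1..t}" "degree E v \<in> {degree E u..t}"
      using degree_pos[OF finE] assms(2,3) e uv by auto
    ultimately show "e \<in> (\<Union>p\<in>{1..t}. \<Union>q\<in>{p..t}. S p q)" by blast
  qed
  then have "card G \<le> card (\<Union>p\<in>{1..t}. \<Union>q\<in>{p..t}. S p q)"
    by (rule card_mono[rotated]) (simp add: S_def finE)
  also have "\<dots> \<le> (\<Sum>p\<in>{1..t}. card (\<Union>q\<in>{p..t}. S p q))" by (rule card_UN_le) simp
  also have "\<dots> \<le> (\<Sum>p\<in>{1..t}. \<Sum>q\<in>{p..t}. card (S p q))"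
    by (intro sum_mono card_UN_le) simp
  finally show ?thesis unfolding S_def num_edges_deg_def .
qed

lemma mult_less_dvd_imp_add_le:
  fixes k d n :: nat
  assumes "d dvd n" "k * d < n"
  shows "k * d + d \<le> n"
proof -
  obtain m where "n = d * m" using assms(1) by (rule dvdE)
  with assms(2) have "Suc k \<le> m" by (simp add: mult.commute)
  then have "Suc k * d \<le> m * d" by (rule mult_le_mono1)
  with \<open>n = d * m\<close> show ?thesis by (simp add: mult.commute)
qed

lemma tree_card_edges_avoiding_independent_set:
  assumes tree: "is_tree V E" and "d dvd card V" and "D \<subseteq> V"
    and deg: "\<And>v. v \<in> D \<Longrightarrow> degree E v = d" and indep: "\<And>e. e \<in> E \<Longrightarrow> \<not> e \<subseteq> D"
  shows "d - 1 \<le> card {e \<in> E. e \<inter> D = {}}"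
proof -
  have sg: "simple_graph V E" using tree unfolding is_tree_def by simp
  have fin: "finite V" "finite E" using sg simple_graph_def simple_graph_finite_edges by auto
  let ?H = "{e \<in> E. e \<inter> D \<noteq> {}}"
  have "card ?H = card D * d"
    using card_edges_meeting_independent_set[OF sg _ indep] finite_subset[OF \<open>D \<subseteq> V\<close> fin(1)]
    by (simp add: deg)
  moreover have "card ?H \<le> card E" by (rule card_mono[OF fin(2)]) blast
  ultimately have "card ?H + d \<le> card V"
    using mult_less_dvd_imp_add_le[OF \<open>d dvd card V\<close>] tree_card_edges[OF tree] by simp
  moreover have "card {e \<in> E. e \<inter> D = {}} = card E - card ?H"
  proof -
    have "{e \<in> E. e \<inter> D = {}} = E - ?H" by blast
    then show ?thesis using fin(2) by (simp add: card_Diff_subset)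
  qed
  ultimately show ?thesis using tree_card_edges[OF tree] by linarith
qed

lemma num_edges_deg_diag_zero_independent:
  assumes "simple_graph V E" "num_edges_deg E d d = 0" "e \<in> E"
  shows "\<not> e \<subseteq> {v. degree E v = d}"
proof
  assume sub: "e \<subseteq> {v. degree E v = d}"
  have "card e = 2" using assms(1,3) unfolding simple_graph_def by blast
  then obtain u v where "e = {u, v}" by (meson card_2_iff)
  with sub assms(3) have "e \<in> {e \<in> E. \<exists>u v. e = {u, v} \<and> degree E u = d \<and> degree E v = d}"
    by blast
  moreover have "finite E" using assms(1) by (rule simple_graph_finite_edges)
  ultimately show False using assms(2) unfolding num_edges_deg_def by auto
qed

lemma degree_le_below_gap:
  assumes "finite V" "v \<in> V" "degree E v \<noteq> max_degree V E"
    and "\<And>i. t < i \<Longrightarrow> i < max_degree V E \<Longrightarrow> num_deg V E i = 0"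
  shows "degree E v \<le> t"
proof -
  have "degree E v \<le> max_degree V E" using assms(1,2) unfolding max_degree_def by simp
  moreover have "num_deg V E (degree E v) \<noteq> 0" using assms(1,2) unfolding num_deg_def by auto
  ultimately show ?thesis using assms(3,4) by (meson le_less not_le)
qed

theorem lemma4p4:
  fixes V :: "'a set" and E :: "'a set set" and \<Delta> n t :: nat
  assumes "is_tree V E"
    and "card V = n"
    and "max_degree V E = \<Delta>"
    and "\<Delta> \<ge> 4"
    and "t = (\<Delta> + 3) div 2"
    and "\<Delta> dvd n"
    and "\<And>i'. t < i' \<Longrightarrow> i' < \<Delta> \<Longrightarrow> num_deg V E i' = 0"
    and "num_edges_deg E \<Delta> \<Delta> = 0"
  shows "(\<Sum>p\<in>{1..t}. \<Sum>q\<in>{p..t}. num_edges_deg E p q) \<ge> \<Delta> - 1"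
proof -
  have sg: "simple_graph V E" using assms(1) unfolding is_tree_def by simp
  have fin: "finite V" using sg unfolding simple_graph_def by simp
  define D where "D = {v \<in> V. degree E v = \<Delta>}"
  have indep: "\<not> e \<subseteq> D" if "e \<in> E" for e
    using num_edges_deg_diag_zero_independent[OF sg assms(8) that] unfolding D_def by blast
  have "\<Delta> - 1 \<le> card {e \<in> E. e \<inter> D = {}}"
    by (rule tree_card_edges_avoiding_independent_set[OF assms(1) _ _ _ indep])
      (use assms(2,6) in \<open>auto simp: D_def\<close>)
  also have "\<dots> \<le> (\<Sum>p\<in>{1..t}. \<Sum>q\<in>{p..t}. num_edges_deg E p q)"
  proof (rule card_edges_le_sum_num_edges_deg[OF sg])
    fix e u assume "e \<in> {e \<in> E. e \<inter> D = {}}" "u \<in> e"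
    then have "u \<in> V" "u \<notin> D" using sg unfolding simple_graph_def by blast+
    then show "degree E u \<le> t"
      using degree_le_below_gap[OF fin] assms(3,7) unfolding D_def by blast
  qed auto
  finally show ?thesis .
qed

end
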